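(* Consider an instance of $k$-robust set cover with universe $U$ of $n$ elements and $m$ sets, and a threshold $T\ge0$. Let $\beta=36\ln m$, let $S$ be the set of elements $v\in U$ such that the minimum cost of a set covering $v$ is at least $\beta\cdot\frac{T}{k}$, and let $\Phi_T$ be the set cover of $S$ produced by the greedy set cover algorithm. Let $\Phi^*$ and $T^*$ denote the first-stage cost and second-stage cost of an optimal solution of the $k$-robust instance. If $T\ge T^*$ then $c(\Phi_T)\le H_n\cdot(\Phi^*+12\cdot T^* )$.
   Context: $k$-robust set cover: universe $U$, $|U|=n$, family $\mathcal{F}$ of $m$ sets with costs $c_R\ge0$, inflation $\lambda\ge1$, integer $k\ge1$. A feasible solution is a first-stage family $E_0\subseteq\mathcal{F}$ and for each $D\subseteq U$ with $|D|=k$ a family $E_D$ such that $E_0\cup E_D$ covers $D$; its cost is $c(E_0)+\lambda\max_{|D|=k}c(E_D)$, with first-stage cost $c(E_0)$ and second-stage cost $\max_D c(E_D)$. The greedy set cover algorithm repeatedly picks a set minimizing the ratio of its cost to the number of still-uncovered elements of $S$ it contains. $H_n=\sum_{i=1}^n\frac1i$. *)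

theory Defs
  imports "HOL-Analysis.Harmonic_Numbers"
begin

definition rsc_instance :: "'a set \<Rightarrow> 'a set set \<Rightarrow> ('a set \<Rightarrow> real) \<Rightarrow> real \<Rightarrow> nat \<Rightarrow> bool" where
  "rsc_instance U F c lam k \<longleftrightarrow> finite U \<and> finite F \<and> (\<forall>R\<in>F. R \<subseteq> U) \<and>
     (\<forall>R\<in>F. 0 \<le> c R) \<and> lam \<ge> 1 \<and> k \<ge> 1"

definition scenarios :: "'a set \<Rightarrow> nat \<Rightarrow> 'a set set" where
  "scenarios U k = {D. D \<subseteq> U \<and> card D = k}"

definition rsc_feasible :: "'a set \<Rightarrow> 'a set set \<Rightarrow> nat \<Rightarrow> 'a set set \<Rightarrow> ('a set \<Rightarrow> 'a set set) \<Rightarrow> bool" where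
  "rsc_feasible U F k E0 ED \<longleftrightarrow> E0 \<subseteq> F \<and>
     (\<forall>D\<in>scenarios U k. ED D \<subseteq> F \<and> D \<subseteq> \<Union>(E0 \<union> ED D))"

definition first_stage_cost :: "('a set \<Rightarrow> real) \<Rightarrow> 'a set set \<Rightarrow> real" where
  "first_stage_cost c E0 = sum c E0"

text \<open>Second-stage cost: max over scenarios (0 if there are none; costs are nonnegative).\<close>
definition second_stage_cost :: "'a set \<Rightarrow> nat \<Rightarrow> ('a set \<Rightarrow> real) \<Rightarrow> ('a set \<Rightarrow> 'a set set) \<Rightarrow> real" where
  "second_stage_cost U k c ED = Max (insert 0 ((\<lambda>D. sum c (ED D)) ` scenarios U k))"

definition rsc_cost :: "'a set \<Rightarrow> nat \<Rightarrow> ('a set \<Rightarrow> real) \<Rightarrow> real \<Rightarrow> 'a set set \<Rightarrow> ('a set \<Rightarrow> 'a set set) \<Rightarrow> real" where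
  "rsc_cost U k c lam E0 ED = first_stage_cost c E0 + lam * second_stage_cost U k c ED"

definition rsc_optimal :: "'a set \<Rightarrow> 'a set set \<Rightarrow> ('a set \<Rightarrow> real) \<Rightarrow> real \<Rightarrow> nat \<Rightarrow> 'a set set \<Rightarrow> ('a set \<Rightarrow> 'a set set) \<Rightarrow> bool" where
  "rsc_optimal U F c lam k E0 ED \<longleftrightarrow> rsc_feasible U F k E0 ED \<and>
     (\<forall>E0' ED'. rsc_feasible U F k E0' ED' \<longrightarrow> rsc_cost U k c lam E0 ED \<le> rsc_cost U k c lam E0' ED')"

text \<open>Any tie-breaking is allowed.\<close>
definition greedy_run :: "'a set set \<Rightarrow> ('a set \<Rightarrow> real) \<Rightarrow> 'a set \<Rightarrow> 'a set list \<Rightarrow> bool" where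
  "greedy_run F c S xs \<longleftrightarrow>
     (\<forall>i<length xs. let W = S - \<Union>(set (take i xs)) in
        xs ! i \<in> F \<and> xs ! i \<inter> W \<noteq> {} \<and>
        (\<forall>R\<in>F. R \<inter> W \<noteq> {} \<longrightarrow>
           c (xs ! i) / real (card (xs ! i \<inter> W)) \<le> c R / real (card (R \<inter> W)))) \<and>
     S \<subseteq> \<Union>(set xs)"

end

theory Submission
  imports Defs
begin

text \<open>Charge the cost of every set chosen by greedy evenly to the elements it newly covers.
The elements of a set R are charged, in the order in which they get covered, at most
c R / j, c R / (j - 1), ..., so every family of cost C is charged at most H(n) C; in particular
the elements covered by the first stage get at most H(n) \<Phi>*. Let P be the charge of the
remaining elements of S. Any k of them lie in one scenario, hence are covered by a subfamily of
a second-stage solution of cost at most T*, which is charged at most H(n) T*. All sets meeting S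
cost at least 36 ln m T/k, so such a subfamily has at most k/(36 ln m) sets and there are at
most 4^k of them. Expanding P^k as a sum over k-tuples and charging each tuple to one such
subfamily gives P^k \<le> 4^k (H(n) T*)^k, i.e. P \<le> 4 H(n) T*.\<close>

lemma sum_inverse_card_ge_le_harm:
  fixes f :: "'b \<Rightarrow> nat"
  assumes "finite A"
  shows "(\<Sum>e\<in>A. 1 / real (card {e'\<in>A. f e \<le> f e'})) \<le> harm (card A)"
  using assms
proof (induction "card A" arbitrary: A)
  case 0
  then show ?case by (simp add: harm_nonneg)
next
  case (Suc n)
  then have "Min (f ` A) \<in> f ` A" by (intro Min_in) auto
  then obtain e0 where e0: "e0 \<in> A" "f e0 = Min (f ` A)" by auto
  then have e0_min: "{e'\<in>A. f e0 \<le> f e'} = A" using Suc.prems by auto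
  let ?B = "A - {e0}"
  have card_B: "card ?B = n" and fin_B: "finite ?B" using Suc e0 by auto
  have drop_e0: "1 / real (card {e'\<in>A. f e \<le> f e'}) \<le> 1 / real (card {e'\<in>?B. f e \<le> f e'})"
    if "e \<in> ?B" for e
  proof -
    have "card {e'\<in>?B. f e \<le> f e'} \<le> card {e'\<in>A. f e \<le> f e'}"
      using Suc.prems by (intro card_mono) auto
    moreover have "card {e'\<in>?B. f e \<le> f e'} > 0"
      using that fin_B by (subst card_gt_0_iff) auto
    ultimately show ?thesis by (simp add: frac_le)
  qed
  have "(\<Sum>e\<in>A. 1 / real (card {e'\<in>A. f e \<le> f e'}))
      = 1 / real (card A) + (\<Sum>e\<in>?B. 1 / real (card {e'\<in>A. f e \<le> f e'}))"
    using Suc.prems e0 e0_min by (simp add: sum.remove)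
  also have "\<dots> \<le> 1 / real (card A) + (\<Sum>e\<in>?B. 1 / real (card {e'\<in>?B. f e \<le> f e'}))"
    using drop_e0 by (intro add_left_mono sum_mono) auto
  also have "\<dots> \<le> 1 / real (card A) + harm n"
    using Suc.hyps(1)[OF card_B[symmetric] fin_B] card_B by simp
  also have "\<dots> = harm (card A)"
    using Suc.hyps(2)[symmetric] by (simp add: harm_Suc field_simps)
  finally show ?case .
qed

definition first_cover :: "'a set list \<Rightarrow> 'a \<Rightarrow> nat" where
  "first_cover xs e = (LEAST i. i < length xs \<and> e \<in> xs ! i)"

definition uncovered :: "'a set \<Rightarrow> 'a set list \<Rightarrow> nat \<Rightarrow> 'a set" where
  "uncovered S xs i = S - \<Union>(set (take i xs))"

definition greedy_price :: "('a set \<Rightarrow> real) \<Rightarrow> 'a set \<Rightarrow> 'a set list \<Rightarrow> 'a \<Rightarrow> real" where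
  "greedy_price c S xs e =
     (let i = first_cover xs e in c (xs ! i) / real (card (xs ! i \<inter> uncovered S xs i)))"

lemma first_cover_spec:
  assumes "S \<subseteq> \<Union>(set xs)" "e \<in> S"
  shows "first_cover xs e < length xs" "e \<in> xs ! first_cover xs e"
    "\<And>j. j < first_cover xs e \<Longrightarrow> e \<notin> xs ! j"
proof -
  have ex: "\<exists>i. i < length xs \<and> e \<in> xs ! i"
    using assms by (metis UnionE in_set_conv_nth subsetD)
  show "first_cover xs e < length xs" "e \<in> xs ! first_cover xs e"
    using LeastI_ex[OF ex] unfolding first_cover_def by auto
  show "e \<notin> xs ! j" if "j < first_cover xs e" for j
    using that not_less_Least[of j "\<lambda>i. i < length xs \<and> e \<in> xs ! i"] LeastI_ex[OF ex]
    unfolding first_cover_def by auto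
qed

lemma first_cover_le:
  assumes "i < length xs" "e \<in> xs ! i"
  shows "first_cover xs e \<le> i"
  unfolding first_cover_def using assms by (intro Least_le) auto

lemma mem_uncovered_iff:
  assumes "S \<subseteq> \<Union>(set xs)"
  shows "e \<in> uncovered S xs i \<longleftrightarrow> e \<in> S \<and> i \<le> first_cover xs e"
proof
  assume e: "e \<in> uncovered S xs i"
  then have "e \<in> S" by (simp add: uncovered_def)
  moreover have "\<not> first_cover xs e < i"
  proof
    assume "first_cover xs e < i"
    then have "xs ! first_cover xs e \<in> set (take i xs)"
      using first_cover_spec(1)[OF assms \<open>e \<in> S\<close>] by (auto simp: in_set_conv_nth)
    then show False using e first_cover_spec(2)[OF assms \<open>e \<in> S\<close>] by (auto simp: uncovered_def)
  qed
  ultimately show "e \<in> S \<and> i \<le> first_cover xs e" by simp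
next
  assume "e \<in> S \<and> i \<le> first_cover xs e"
  then show "e \<in> uncovered S xs i"
    using first_cover_spec(3)[OF assms] by (auto simp: uncovered_def in_set_conv_nth)
qed

lemma greedy_run_step:
  assumes "greedy_run F c S xs" "i < length xs"
  shows "xs ! i \<in> F" "xs ! i \<inter> uncovered S xs i \<noteq> {}"
    "\<And>R. R \<in> F \<Longrightarrow> R \<inter> uncovered S xs i \<noteq> {} \<Longrightarrow>
       c (xs ! i) / real (card (xs ! i \<inter> uncovered S xs i))
         \<le> c R / real (card (R \<inter> uncovered S xs i))"
  using assms unfolding greedy_run_def uncovered_def Let_def by blast+

lemma greedy_run_covers: "greedy_run F c S xs \<Longrightarrow> S \<subseteq> \<Union>(set xs)"
  by (simp add: greedy_run_def)

lemma greedy_price_nonneg: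
  assumes "greedy_run F c S xs" "\<forall>R\<in>F. 0 \<le> c R" "e \<in> S"
  shows "0 \<le> greedy_price c S xs e"
  using assms greedy_run_step(1)[OF assms(1) first_cover_spec(1)[OF greedy_run_covers[OF assms(1)]]]
  by (simp add: greedy_price_def Let_def)

lemma greedy_cost_le_sum_greedy_price:
  assumes g: "greedy_run F c S xs" and c_nonneg: "\<forall>R\<in>F. 0 \<le> c R" and "finite S"
  shows "sum c (set xs) \<le> (\<Sum>e\<in>S. greedy_price c S xs e)"
proof -
  have cov: "S \<subseteq> \<Union>(set xs)" using g by (rule greedy_run_covers)
  have newly_covered: "{e \<in> S. first_cover xs e = i} = xs ! i \<inter> uncovered S xs i"
    if "i < length xs" for i
    using first_cover_spec(2)[OF cov] mem_uncovered_iff[OF cov] first_cover_le[OF that]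
    by (auto intro: antisym)
  have "set xs = (!) xs ` {..<length xs}" by (auto simp: in_set_conv_nth)
  then have "sum c (set xs) \<le> (\<Sum>i<length xs. c (xs ! i))"
    using sum_image_le[of "{..<length xs}" c "(!) xs"] greedy_run_step(1)[OF g] c_nonneg
    by (simp add: o_def)
  also have "\<dots> = (\<Sum>i<length xs. \<Sum>e\<in>{e \<in> S. first_cover xs e = i}. greedy_price c S xs e)"
  proof (rule sum.cong[OF refl])
    fix i assume "i \<in> {..<length xs}"
    then have i: "i < length xs" by simp
    have "card (xs ! i \<inter> uncovered S xs i) > 0"
      using greedy_run_step(2)[OF g i] \<open>finite S\<close> by (simp add: card_gt_0_iff uncovered_def)
    moreover have "greedy_price c S xs e = c (xs ! i) / real (card (xs ! i \<inter> uncovered S xs i))"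
      if "e \<in> {e \<in> S. first_cover xs e = i}" for e
      using that by (simp add: greedy_price_def)
    ultimately show "c (xs ! i) = (\<Sum>e\<in>{e \<in> S. first_cover xs e = i}. greedy_price c S xs e)"
      by (simp add: newly_covered[OF i])
  qed
  also have "\<dots> = (\<Sum>e\<in>S. greedy_price c S xs e)"
    using sum.group[OF \<open>finite S\<close>, of "{..<length xs}" "first_cover xs"] first_cover_spec(1)[OF cov]
    by auto
  finally show ?thesis .
qed

lemma sum_greedy_price_set_le_harm:
  assumes g: "greedy_run F c S xs" and c_nonneg: "\<forall>R\<in>F. 0 \<le> c R" and "finite S" and R: "R \<in> F"
  shows "(\<Sum>e\<in>R \<inter> S. greedy_price c S xs e) \<le> harm (card (R \<inter> S)) * c R"
proof -
  have cov: "S \<subseteq> \<Union>(set xs)" using g by (rule greedy_run_covers)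
  let ?A = "R \<inter> S"
  let ?later = "\<lambda>e. {e'\<in>?A. first_cover xs e \<le> first_cover xs e'}"
  have price_le: "greedy_price c S xs e \<le> c R * (1 / real (card (?later e)))" if e: "e \<in> ?A" for e
  proof -
    let ?i = "first_cover xs e"
    have "R \<inter> uncovered S xs ?i = ?later e"
      using mem_uncovered_iff[OF cov] by auto
    moreover have "R \<inter> uncovered S xs ?i \<noteq> {}"
      using mem_uncovered_iff[OF cov] e by auto
    then have "greedy_price c S xs e \<le> c R / real (card (R \<inter> uncovered S xs ?i))"
      using greedy_run_step(3)[OF g first_cover_spec(1)[OF cov] R] e
      by (simp add: greedy_price_def Let_def)
    ultimately show ?thesis by simp
  qed
  have "(\<Sum>e\<in>?A. greedy_price c S xs e) \<le> (\<Sum>e\<in>?A. c R * (1 / real (card (?later e))))"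
    using price_le by (intro sum_mono) auto
  also have "\<dots> = c R * (\<Sum>e\<in>?A. 1 / real (card (?later e)))"
    by (simp add: sum_distrib_left)
  also have "\<dots> \<le> c R * harm (card ?A)"
    using sum_inverse_card_ge_le_harm[of ?A "first_cover xs"] \<open>finite S\<close> c_nonneg R
    by (intro mult_left_mono) auto
  finally show ?thesis by (simp add: mult.commute)
qed

lemma sum_greedy_price_family_le_harm:
  assumes g: "greedy_run F c S xs" and c_nonneg: "\<forall>R\<in>F. 0 \<le> c R" and "finite S"
    and "finite G" "G \<subseteq> F" and n: "\<And>R. R \<in> F \<Longrightarrow> card (R \<inter> S) \<le> n"
  shows "(\<Sum>e\<in>S \<inter> \<Union>G. greedy_price c S xs e) \<le> harm n * sum c G"
proof -
  let ?p = "greedy_price c S xs"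
  have "(\<Sum>e\<in>S \<inter> \<Union>G. ?p e) \<le> (\<Sum>e\<in>S \<inter> \<Union>G. \<Sum>R\<in>G. if e \<in> R then ?p e else 0)"
  proof (rule sum_mono)
    fix e assume "e \<in> S \<inter> \<Union>G"
    then obtain R where "R \<in> G" "e \<in> R" "e \<in> S" by auto
    then show "?p e \<le> (\<Sum>R\<in>G. if e \<in> R then ?p e else 0)"
      using member_le_sum[of R G "\<lambda>R. if e \<in> R then ?p e else 0"] \<open>finite G\<close>
        greedy_price_nonneg[OF g c_nonneg] by auto
  qed
  also have "\<dots> = (\<Sum>R\<in>G. \<Sum>e\<in>R \<inter> S. ?p e)"
    by (subst sum.swap) (auto simp: sum.inter_restrict[symmetric] \<open>finite S\<close> intro!: sum.cong)
  also have "\<dots> \<le> (\<Sum>R\<in>G. harm n * c R)"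
  proof (rule sum_mono)
    fix R assume "R \<in> G"
    then have R: "R \<in> F" using \<open>G \<subseteq> F\<close> by auto
    have "(\<Sum>e\<in>R \<inter> S. ?p e) \<le> harm (card (R \<inter> S)) * c R"
      by (rule sum_greedy_price_set_le_harm[OF g c_nonneg \<open>finite S\<close> R])
    also have "\<dots> \<le> harm n * c R"
      using c_nonneg R n[OF R] by (intro mult_right_mono harm_mono) auto
    finally show "(\<Sum>e\<in>R \<inter> S. ?p e) \<le> harm n * c R" .
  qed
  also have "\<dots> = harm n * sum c G" by (simp add: sum_distrib_left)
  finally show ?thesis .
qed

lemma sum_power_le_card_mul_power:
  fixes w :: "'a \<Rightarrow> real" and B :: "'i \<Rightarrow> 'a set"
  assumes "finite A" and w_nonneg: "\<And>x. x \<in> A \<Longrightarrow> 0 \<le> w x" and "finite I"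
    and cover: "\<And>g. g \<in> PiE {..<k} (\<lambda>_. A) \<Longrightarrow> \<exists>i\<in>I. g ` {..<k} \<subseteq> B i"
    and mass: "\<And>i. i \<in> I \<Longrightarrow> (\<Sum>x\<in>A \<inter> B i. w x) \<le> q"
  shows "(\<Sum>x\<in>A. w x) ^ k \<le> real (card I) * q ^ k"
proof -
  let ?tuples = "\<lambda>X. PiE {..<k} (\<lambda>_. X)"
  let ?f = "\<lambda>g. \<Prod>j<k. w (g j)"
  have f_nonneg: "0 \<le> ?f g" if "g \<in> ?tuples A" for g
    using that w_nonneg by (intro prod_nonneg) (auto simp: PiE_iff)
  define idx where "idx g = (SOME i. i \<in> I \<and> g ` {..<k} \<subseteq> B i)" for g
  have idx: "idx g \<in> I" "g \<in> ?tuples (A \<inter> B (idx g))" if "g \<in> ?tuples A" for g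
    using someI_ex[OF cover[OF that, unfolded Bex_def]] that
    by (auto simp: idx_def PiE_iff)
  have power_eq: "(\<Sum>x\<in>X. w x) ^ k = (\<Sum>g\<in>?tuples X. ?f g)" if "finite X" for X
    using prod_sum_PiE[of "{..<k}" "\<lambda>_. X" "\<lambda>_. w"] that by simp
  have "idx ` ?tuples A \<subseteq> I" using idx(1) by blast
  then have "(\<Sum>x\<in>A. w x) ^ k = (\<Sum>i\<in>I. \<Sum>g\<in>{g \<in> ?tuples A. idx g = i}. ?f g)"
    using power_eq[OF \<open>finite A\<close>] sum.group[of "?tuples A" I idx ?f] \<open>finite A\<close> \<open>finite I\<close>
    by (simp add: finite_PiE)
  also have "\<dots> \<le> (\<Sum>i\<in>I. \<Sum>g\<in>?tuples (A \<inter> B i). ?f g)"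
  proof (intro sum_mono sum_mono2)
    fix i
    show "finite (?tuples (A \<inter> B i))" using \<open>finite A\<close> by (simp add: finite_PiE)
    show "{g \<in> ?tuples A. idx g = i} \<subseteq> ?tuples (A \<inter> B i)" using idx(2) by blast
    show "0 \<le> ?f g" if "g \<in> ?tuples (A \<inter> B i) - {g \<in> ?tuples A. idx g = i}" for g
      using that f_nonneg PiE_mono[of "{..<k}" "\<lambda>_. A \<inter> B i" "\<lambda>_. A"] by blast
  qed
  also have "\<dots> = (\<Sum>i\<in>I. (\<Sum>x\<in>A \<inter> B i. w x) ^ k)"
    using power_eq \<open>finite A\<close> by simp
  also have "\<dots> \<le> (\<Sum>i\<in>I. q ^ k)"
    using mass w_nonneg by (intro sum_mono power_mono sum_nonneg) auto
  finally show ?thesis by simp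
qed

lemma card_subfamilies_le:
  assumes "finite F" and "\<And>G. G \<in> GG \<Longrightarrow> G \<subseteq> F \<and> card G \<le> r"
  shows "card GG \<le> (\<Sum>i\<le>r. card F ^ i)"
proof -
  let ?lists = "{xs. set xs \<subseteq> F \<and> length xs \<le> r}"
  have "GG \<subseteq> set ` ?lists"
  proof
    fix G assume G: "G \<in> GG"
    then have "finite G" using assms finite_subset by blast
    then obtain xs where "set xs = G" "distinct xs" using finite_distinct_list by blast
    then show "G \<in> set ` ?lists" using assms(2)[OF G] distinct_card[of xs] by auto
  qed
  then have "card GG \<le> card (set ` ?lists)"
    using assms(1) by (intro card_mono finite_imageI finite_lists_length_le) auto
  also have "\<dots> \<le> card ?lists"
    using assms(1) by (intro card_image_le finite_lists_length_le)
  also have "\<dots> = (\<Sum>i\<le>r. card F ^ i)" using card_lists_length_le[OF assms(1)] by simp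
  finally show ?thesis .
qed

lemma card_subfamilies_le_four_power:
  assumes "finite F" "k \<ge> 1"
    and sub: "\<And>G. G \<in> GG \<Longrightarrow> G \<subseteq> F"
    and small: "\<And>G. G \<in> GG \<Longrightarrow> real (card G) * (36 * ln (real (card F))) \<le> real k"
  shows "real (card GG) \<le> 4 ^ k"
proof (cases "card F \<ge> 2")
  case False
  have "card GG \<le> card (Pow F)" using sub \<open>finite F\<close> by (intro card_mono) auto
  also have "\<dots> \<le> 2 ^ 1"
    using False \<open>finite F\<close> by (simp only: card_Pow) (intro power_increasing, auto)
  also have "(2::nat) ^ 1 \<le> 4 ^ k"
    using power_increasing[of 1 k "4::nat"] \<open>k \<ge> 1\<close> by simp
  finally show ?thesis by (metis of_nat_le_iff of_nat_numeral of_nat_power)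
next
  case True
  let ?m = "card F"
  have ln_half: "1/2 \<le> ln (2::real)" using ln_le_minus_one[of "1/2::real"] by (simp add: ln_div)
  have "ln 2 \<le> ln (real ?m)" using True by simp
  with ln_half have ln_m: "1/2 \<le> ln (real ?m)" by linarith
  define r where "r = nat \<lfloor>real k / (36 * ln (real ?m))\<rfloor>"
  have r_bound: "real r * (36 * ln (real ?m)) \<le> real k"
    using ln_m by (simp add: r_def pos_le_divide_eq[symmetric])
  have "r \<le> k"
    using r_bound ln_m mult_left_mono[of 1 "36 * ln (real ?m)" "real r"] by simp
  have card_le: "card G \<le> r" if "G \<in> GG" for G
  proof -
    have "real (card G) \<le> real k / (36 * ln (real ?m))"
      using small[OF that] ln_m by (simp add: pos_le_divide_eq)
    then show ?thesis unfolding r_def by linarith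
  qed
  have "card GG \<le> (\<Sum>i\<le>r. ?m ^ r)"
    using card_subfamilies_le[of F GG r] sub card_le \<open>finite F\<close> True
      sum_mono[of "{..r}" "\<lambda>i. ?m ^ i" "\<lambda>_. ?m ^ r"] power_increasing[of _ r ?m]
    by fastforce
  then have "real (card GG) \<le> real ((r + 1) * ?m ^ r)" by (simp only: of_nat_le_iff) simp
  also have "\<dots> = real (r + 1) * real ?m ^ r" by (simp add: algebra_simps)
  also have "\<dots> \<le> 2 ^ k * 2 ^ k"
  proof (rule mult_mono)
    have "r + 1 \<le> 2 ^ k" using \<open>r \<le> k\<close> less_exp[of k] by linarith
    then show "real (r + 1) \<le> 2 ^ k" by (metis of_nat_le_iff of_nat_numeral of_nat_power)
    have "real k / 36 \<le> real k * ln 2"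
      using ln_half mult_left_mono[of "1/36" "ln 2" "real k"] by simp
    then have "real r * ln (real ?m) \<le> real k * ln 2" using r_bound by simp
    then have "exp (real r * ln (real ?m)) \<le> exp (real k * ln 2)" by simp
    then show "real ?m ^ r \<le> 2 ^ k"
      using True by (simp add: exp_of_nat_mult)
  qed auto
  also have "\<dots> = 4 ^ k" by (simp flip: power_mult_distrib)
  finally show ?thesis .
qed

lemma exists_scenario_superset:
  assumes "finite U" "A \<subseteq> U" "card A \<le> k" "k \<le> card U"
  shows "\<exists>D\<in>scenarios U k. A \<subseteq> D"
proof -
  have "finite A" using assms finite_subset by blast
  then have "k - card A \<le> card (U - A)" using assms by (simp add: card_Diff_subset)
  then obtain B where B: "B \<subseteq> U - A" "card B = k - card A" "finite B"
    by (rule obtain_subset_with_card_n)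
  have "card (A \<union> B) = card A + card B"
    using B \<open>finite A\<close> by (intro card_Un_disjoint) auto
  then show ?thesis using B assms by (intro bexI[of _ "A \<union> B"]) (auto simp: scenarios_def)
qed

lemma rsc_feasible_covers_small_set:
  assumes inst: "rsc_instance U F c lam k" and "k \<le> card U"
    and feas: "rsc_feasible U F k E0 ED"
    and second_stage: "\<And>D. D \<in> scenarios U k \<Longrightarrow> sum c (ED D) \<le> t"
    and A: "A \<subseteq> U - \<Union>E0" "card A \<le> k"
  shows "\<exists>G\<subseteq>F. sum c G \<le> t \<and> A \<subseteq> \<Union>G \<and> (\<forall>R\<in>G. R \<inter> A \<noteq> {})"
proof -
  have "finite U" "finite F" and c_nonneg: "\<forall>R\<in>F. 0 \<le> c R"
    using inst by (auto simp: rsc_instance_def)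
  obtain D where D: "D \<in> scenarios U k" "A \<subseteq> D"
    using exists_scenario_superset[OF \<open>finite U\<close> _ A(2) \<open>k \<le> card U\<close>] A(1) by blast
  have ED: "ED D \<subseteq> F" "D \<subseteq> \<Union>(E0 \<union> ED D)"
    using feas D(1) by (auto simp: rsc_feasible_def)
  define G where "G = {R \<in> ED D. R \<inter> A \<noteq> {}}"
  have "sum c G \<le> sum c (ED D)"
    using ED(1) c_nonneg \<open>finite F\<close> finite_subset by (intro sum_mono2) (auto simp: G_def)
  moreover have "A \<subseteq> \<Union>G" using ED(2) D(2) A(1) unfolding G_def by blast
  ultimately show ?thesis
    using second_stage[OF D(1)] ED(1) by (intro exI[of _ G]) (auto simp: G_def)
qed

definition cheap_covers :: "'a set set \<Rightarrow> ('a set \<Rightarrow> real) \<Rightarrow> real \<Rightarrow> 'a set \<Rightarrow> 'a set set set" where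
  "cheap_covers F c t A = {G. G \<subseteq> F \<and> sum c G \<le> t \<and> (\<forall>R\<in>G. R \<inter> A \<noteq> {})}"

lemma finite_cheap_covers: "finite F \<Longrightarrow> finite (cheap_covers F c t A)"
  by (rule finite_subset[of _ "Pow F"]) (auto simp: cheap_covers_def)

lemma card_cheap_covers_le_four_power:
  assumes "finite F" "k \<ge> 1" "0 < t" "t \<le> T"
    and expensive: "\<And>v R. v \<in> A \<Longrightarrow> R \<in> F \<Longrightarrow> v \<in> R \<Longrightarrow>
                      36 * ln (real (card F)) * (T / real k) \<le> c R"
  shows "real (card (cheap_covers F c t A)) \<le> 4 ^ k"
proof (rule card_subfamilies_le_four_power[OF \<open>finite F\<close> \<open>k \<ge> 1\<close>])
  fix G assume G: "G \<in> cheap_covers F c t A"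
  have "real (card G) * (36 * ln (real (card F)) * (T / real k)) \<le> sum c G"
  proof (rule sum_bounded_below)
    fix R assume "R \<in> G"
    then have "R \<in> F" "R \<inter> A \<noteq> {}" using G by (auto simp: cheap_covers_def)
    moreover obtain v where "v \<in> R" "v \<in> A" using \<open>R \<inter> A \<noteq> {}\<close> by blast
    ultimately show "36 * ln (real (card F)) * (T / real k) \<le> c R" using expensive by blast
  qed
  also have "\<dots> \<le> T" using G \<open>t \<le> T\<close> by (simp add: cheap_covers_def)
  finally have "real (card G) * (36 * ln (real (card F))) * T \<le> real k * T"
    using \<open>k \<ge> 1\<close> by (simp add: field_simps)
  then show "real (card G) * (36 * ln (real (card F))) \<le> real k"
    using \<open>0 < t\<close> \<open>t \<le> T\<close> by simp
qed (auto simp: cheap_covers_def)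

lemma charge_power_le_card_cheap_covers:
  assumes inst: "rsc_instance U F c lam k" and "k \<le> card U"
    and feas: "rsc_feasible U F k E0 ED"
    and second_stage: "\<And>D. D \<in> scenarios U k \<Longrightarrow> sum c (ED D) \<le> t"
    and A: "A \<subseteq> U - \<Union>E0" and p_nonneg: "\<And>e. e \<in> A \<Longrightarrow> 0 \<le> p e" and "0 \<le> H"
    and charge: "\<And>G. G \<subseteq> F \<Longrightarrow> (\<Sum>e\<in>A \<inter> \<Union>G. p e) \<le> H * sum c G"
  shows "(\<Sum>e\<in>A. p e) ^ k \<le> real (card (cheap_covers F c t A)) * (H * t) ^ k"
proof (rule sum_power_le_card_mul_power[where B = Union])
  have "finite U" "finite F" using inst by (auto simp: rsc_instance_def)
  show "finite A" using A \<open>finite U\<close> by (meson Diff_subset finite_subset subset_trans)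
  show "finite (cheap_covers F c t A)" using \<open>finite F\<close> by (rule finite_cheap_covers)
  show "0 \<le> p e" if "e \<in> A" for e using that by (rule p_nonneg)
next
  fix g assume "g \<in> PiE {..<k} (\<lambda>_. A)"
  then have "g ` {..<k} \<subseteq> A" by (auto simp: PiE_iff)
  then have uncovered: "g ` {..<k} \<subseteq> U - \<Union>E0" using A by blast
  have "card (g ` {..<k}) \<le> k" using card_image_le[of "{..<k}" g] by simp
  then obtain G where G: "G \<subseteq> F" "sum c G \<le> t" "g ` {..<k} \<subseteq> \<Union>G"
    "\<forall>R\<in>G. R \<inter> g ` {..<k} \<noteq> {}"
    using rsc_feasible_covers_small_set[OF inst \<open>k \<le> card U\<close> feas second_stage uncovered]
    by blast
  have "\<forall>R\<in>G. R \<inter> A \<noteq> {}"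
    using G(4) Int_mono[OF order_refl \<open>g ` {..<k} \<subseteq> A\<close>] by fast
  then have "G \<in> cheap_covers F c t A" using G(1,2) by (simp add: cheap_covers_def)
  then show "\<exists>G\<in>cheap_covers F c t A. g ` {..<k} \<subseteq> \<Union>G" using G(3) by blast
next
  fix G assume "G \<in> cheap_covers F c t A"
  then have "G \<subseteq> F" "sum c G \<le> t" by (auto simp: cheap_covers_def)
  then show "(\<Sum>e\<in>A \<inter> \<Union>G. p e) \<le> H * t"
    using charge[of G] mult_left_mono[OF _ \<open>0 \<le> H\<close>, of "sum c G" t] by linarith
qed

lemma charge_outside_first_stage_le:
  assumes inst: "rsc_instance U F c lam k" and "k \<le> card U"
    and feas: "rsc_feasible U F k E0 ED"
    and second_stage: "\<And>D. D \<in> scenarios U k \<Longrightarrow> sum c (ED D) \<le> t" and "t \<le> T"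
    and "S \<subseteq> U"
    and expensive: "\<And>v R. v \<in> S \<Longrightarrow> R \<in> F \<Longrightarrow> v \<in> R \<Longrightarrow>
                      36 * ln (real (card F)) * (T / real k) \<le> c R"
    and p_nonneg: "\<And>e. e \<in> S \<Longrightarrow> 0 \<le> p e" and "0 \<le> H"
    and charge: "\<And>G. G \<subseteq> F \<Longrightarrow> (\<Sum>e\<in>S \<inter> \<Union>G. p e) \<le> H * sum c G"
  shows "(\<Sum>e\<in>S - \<Union>E0. p e) \<le> 4 * H * t"
proof -
  let ?A = "S - \<Union>E0"
  have "finite U" "finite F" "k \<ge> 1" and c_nonneg: "\<forall>R\<in>F. 0 \<le> c R"
    using inst by (auto simp: rsc_instance_def)
  have "0 \<le> t"
  proof -
    obtain D where D: "D \<in> scenarios U k"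
      using exists_scenario_superset[of U "{}" k] \<open>finite U\<close> \<open>k \<le> card U\<close> by auto
    then have "ED D \<subseteq> F" using feas by (simp add: rsc_feasible_def)
    then have "0 \<le> sum c (ED D)" using c_nonneg by (intro sum_nonneg) auto
    then show ?thesis using second_stage[OF D] by linarith
  qed
  have "finite S" using \<open>S \<subseteq> U\<close> \<open>finite U\<close> finite_subset by blast
  have charge_A: "(\<Sum>e\<in>?A \<inter> \<Union>G. p e) \<le> H * sum c G" if "G \<subseteq> F" for G
  proof -
    have "(\<Sum>e\<in>?A \<inter> \<Union>G. p e) \<le> (\<Sum>e\<in>S \<inter> \<Union>G. p e)"
      using p_nonneg \<open>finite S\<close> by (intro sum_mono2) auto
    with charge[OF that] show ?thesis by linarith
  qed
  have "(\<Sum>e\<in>?A. p e) ^ k \<le> real (card (cheap_covers F c t ?A)) * (H * t) ^ k"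
    using \<open>S \<subseteq> U\<close> p_nonneg
    by (intro charge_power_le_card_cheap_covers[OF inst \<open>k \<le> card U\<close> feas second_stage _ _
          \<open>0 \<le> H\<close> charge_A]) auto
  also have "\<dots> \<le> (4 * H * t) ^ k"
  proof (cases "t = 0")
    case True
    then show ?thesis using \<open>k \<ge> 1\<close> by (simp add: zero_power)
  next
    case False
    with \<open>0 \<le> t\<close> have "real (card (cheap_covers F c t ?A)) \<le> 4 ^ k"
      using expensive \<open>t \<le> T\<close>
      by (intro card_cheap_covers_le_four_power[OF \<open>finite F\<close> \<open>k \<ge> 1\<close>]) auto
    then show ?thesis
      using \<open>0 \<le> H\<close> \<open>0 \<le> t\<close> mult_right_mono[of _ "4 ^ k" "(H * t) ^ k"]
      by (simp add: power_mult_distrib mult.assoc)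
  qed
  finally have "(\<Sum>e\<in>?A. p e) ^ k \<le> (4 * H * t) ^ k" .
  moreover have "0 \<le> (\<Sum>e\<in>?A. p e)" using p_nonneg by (intro sum_nonneg) auto
  ultimately show ?thesis
    using power_mono_iff[of "\<Sum>e\<in>?A. p e" "4 * H * t" k] \<open>k \<ge> 1\<close> \<open>0 \<le> H\<close> \<open>0 \<le> t\<close> by simp
qed

lemma finite_scenarios: "finite U \<Longrightarrow> finite (scenarios U k)"
  by (rule finite_subset[of _ "Pow U"]) (auto simp: scenarios_def)

lemma second_stage_cost_ge:
  "finite U \<Longrightarrow> D \<in> scenarios U k \<Longrightarrow> sum c (ED D) \<le> second_stage_cost U k c ED"
  unfolding second_stage_cost_def by (intro Max_ge) (auto simp: finite_scenarios)

lemma second_stage_cost_nonneg: "finite U \<Longrightarrow> 0 \<le> second_stage_cost U k c ED"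
  unfolding second_stage_cost_def by (intro Max_ge) (auto simp: finite_scenarios)

theorem mainTheorem13:
  fixes U :: "'a set" and F :: "'a set set" and c :: "'a set \<Rightarrow> real"
    and lam T :: real and k :: nat
    and E0 :: "'a set set" and ED :: "'a set \<Rightarrow> 'a set set" and xs :: "'a set list"
  assumes inst: "rsc_instance U F c lam k"
    and kn: "k \<le> card U"
    and T0: "T \<ge> 0"
    and opt: "rsc_optimal U F c lam k E0 ED"
    and TT: "T \<ge> second_stage_cost U k c ED"
    and greedy: "greedy_run F c
        {v \<in> U. \<forall>R\<in>F. v \<in> R \<longrightarrow> c R \<ge> (36 * ln (real (card F))) * (T / real k)} xs"
  shows "sum c (set xs) \<le> harm (card U) *
           (first_stage_cost c E0 + 12 * second_stage_cost U k c ED)"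
proof -
  define S where "S = {v \<in> U. \<forall>R\<in>F. v \<in> R \<longrightarrow> c R \<ge> (36 * ln (real (card F))) * (T / real k)}"
  define t where "t = second_stage_cost U k c ED"
  define H :: real where "H = harm (card U)"
  define p where "p = greedy_price c S xs"
  have g: "greedy_run F c S xs" using greedy by (simp add: S_def)
  have "finite U" "finite F" and c_nonneg: "\<forall>R\<in>F. 0 \<le> c R"
    using inst by (auto simp: rsc_instance_def)
  have feas: "rsc_feasible U F k E0 ED" and "E0 \<subseteq> F"
    using opt by (auto simp: rsc_optimal_def rsc_feasible_def)
  have "S \<subseteq> U" by (auto simp: S_def)
  then have "finite S" "\<And>R. card (R \<inter> S) \<le> card U"
    using \<open>finite U\<close> finite_subset by (blast, intro card_mono, auto)
  then have charge: "(\<Sum>e\<in>S \<inter> \<Union>G. p e) \<le> H * sum c G" if "G \<subseteq> F" for G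
    using sum_greedy_price_family_le_harm[OF g c_nonneg _ finite_subset[OF that \<open>finite F\<close>] that]
    by (simp add: H_def p_def)
  have outside: "(\<Sum>e\<in>S - \<Union>E0. p e) \<le> 4 * H * t"
    using charge_outside_first_stage_le[OF inst kn feas _ _ \<open>S \<subseteq> U\<close> _ _ _ charge]
      second_stage_cost_ge[OF \<open>finite U\<close>] TT greedy_price_nonneg[OF g c_nonneg]
    by (simp add: S_def t_def p_def H_def harm_nonneg)
  have "sum c (set xs) \<le> (\<Sum>e\<in>S \<inter> \<Union>E0. p e) + (\<Sum>e\<in>S - \<Union>E0. p e)"
    using greedy_cost_le_sum_greedy_price[OF g c_nonneg \<open>finite S\<close>]
      sum.Int_Diff[OF \<open>finite S\<close>, of p "\<Union>E0"]
    by (simp add: p_def)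
  also have "\<dots> \<le> H * first_stage_cost c E0 + 4 * H * t"
    using charge[OF \<open>E0 \<subseteq> F\<close>] outside by (simp add: first_stage_cost_def)
  also have "\<dots> \<le> H * (first_stage_cost c E0 + 12 * t)"
    using mult_nonneg_nonneg[OF harm_nonneg second_stage_cost_nonneg[OF \<open>finite U\<close>]]
    by (simp add: H_def t_def algebra_simps)
  finally show ?thesis by (simp add: H_def t_def)
qed

end
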